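(* In the setting where $\mu_0<\mu_1$, $\sigma_H>0$, $\pi,\lambda,p\in(0,1)$ are fixed and $s\in(\mu_0,\mu_1)$, let $A(s)=1-\Phi\big((s-\mu_1)/\sigma_H\big)$, $B(s)=1-\Phi\big((s-\mu_0)/\sigma_H\big)$, \[ e^*=\lambda(1,\pi;s)=\frac{\lambda\,[\pi A+(1-\pi)p]}{\pi\,[\lambda A+(1-\lambda)B]+(1-\pi)\,p},\qquad p_H=\frac{\lambda A}{\lambda A+(1-\lambda)B},\qquad p_L=\lambda, \] and \[ J^+=\log\frac{A}{\lambda A+(1-\lambda)B},\qquad J^-=\log\frac{1-e^*p_H}{1-e^*p_L}. \] Then, holding $(s,\pi,\lambda,p,\mu_0,\mu_1)$ fixed, $\partial_{\sigma_H}J^+<0$ and $\partial_{\sigma_H}J^->0$.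
   Context: Gaussian–quadratic benchmark: $s\mid(\theta,\omega)\sim\mathcal N(\mu_\omega,\sigma_\theta^2)$; the High type recommends risk iff her signal exceeds the cutoff $s$; the Low type recommends risk with signal-independent probability $p$; $p_\theta=\Pr(\omega=1\mid\theta,a=1)$; $e^*$ is the implementer's effort under quadratic cost; $J^+$ and $J^-$ are the log-likelihood-ratio jumps of the type posterior after success and failure following a risky recommendation. *)

theory Defs
  imports "HOL-Probability.Probability"
begin

definition Phi :: "real \<Rightarrow> real" where
  "Phi x = (LINT t:{..x}|lborel. std_normal_density t)"

text \<open>Parameters: mu0, mu1 (state means), sH (High type's signal s.d.),
  pr (prior pi), lam (lambda), p (Low type's risk probability), s (cutoff).\<close>

definition A_fn :: "real \<Rightarrow> real \<Rightarrow> real \<Rightarrow> real" where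
  "A_fn mu1 sH s = 1 - Phi ((s - mu1) / sH)"

definition B_fn :: "real \<Rightarrow> real \<Rightarrow> real \<Rightarrow> real" where
  "B_fn mu0 sH s = 1 - Phi ((s - mu0) / sH)"

definition e_star :: "real \<Rightarrow> real \<Rightarrow> real \<Rightarrow> real \<Rightarrow> real \<Rightarrow> real \<Rightarrow> real \<Rightarrow> real" where
  "e_star mu0 mu1 sH pr lam p s =
     (let A = A_fn mu1 sH s; B = B_fn mu0 sH s in
      lam * (pr * A + (1 - pr) * p) / (pr * (lam * A + (1 - lam) * B) + (1 - pr) * p))"

definition p_H :: "real \<Rightarrow> real \<Rightarrow> real \<Rightarrow> real \<Rightarrow> real \<Rightarrow> real" where
  "p_H mu0 mu1 sH lam s =
     (let A = A_fn mu1 sH s; B = B_fn mu0 sH s in lam * A / (lam * A + (1 - lam) * B))"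

definition p_L :: "real \<Rightarrow> real" where
  "p_L lam = lam"

definition J_plus :: "real \<Rightarrow> real \<Rightarrow> real \<Rightarrow> real \<Rightarrow> real \<Rightarrow> real" where
  "J_plus mu0 mu1 sH lam s =
     (let A = A_fn mu1 sH s; B = B_fn mu0 sH s in ln (A / (lam * A + (1 - lam) * B)))"

definition J_minus :: "real \<Rightarrow> real \<Rightarrow> real \<Rightarrow> real \<Rightarrow> real \<Rightarrow> real \<Rightarrow> real \<Rightarrow> real" where
  "J_minus mu0 mu1 sH pr lam p s =
     (let e = e_star mu0 mu1 sH pr lam p s in
      ln ((1 - e * p_H mu0 mu1 sH lam s) / (1 - e * p_L lam)))"

end

theory Submission
  imports Defs
begin

text \<open>
  Write \<open>D = \<lambda>A + (1 - \<lambda>)B\<close>. Since \<open>J\<^sup>+ = ln (A / D)\<close> depends only on \<open>B / A\<close>, it falls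
  as \<open>\<sigma>\<^sub>H\<close> grows: with the cutoff strictly between the two means, the tail probability \<open>A\<close>
  above the cutoff shrinks and \<open>B\<close> grows. After clearing denominators,
  \<open>J\<^sup>- = ln fail_H - ln D - ln fail_L\<close> for two explicit polynomials in \<open>A, B\<close>; this is strictly
  decreasing in \<open>A\<close> and strictly increasing in \<open>B\<close> on \<open>0 < B \<le> A\<close>, so the chain rule gives
  the opposite sign for \<open>J\<^sup>-\<close>.
\<close>

lemma std_normal_density_pos: "0 < std_normal_density x"
  by (simp add: normal_density_pos)

lemma continuous_on_std_normal_density: "continuous_on S std_normal_density"
  unfolding std_normal_density_def by (intro continuous_intros) auto

lemma Phi_add_interval_integral:
  assumes "a \<le> u"
  shows "Phi u = Phi a + (LBINT t=a..u. std_normal_density t)"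
proof -
  have integrable: "set_integrable lborel S std_normal_density" if "S \<in> sets lborel" for S
    unfolding set_integrable_def using that by (intro integrable_mult_indicator) auto
  have "{..u} = {..a} \<union> {a<..u}"
    using assms by auto
  then have "Phi u = (LINT t:{..a}|lborel. std_normal_density t) + (LINT t:{a<..u}|lborel. std_normal_density t)"
    unfolding Phi_def by (auto intro!: set_integral_Un integrable)
  then show ?thesis
    by (simp add: Phi_def interval_integral_Ioc assms)
qed

lemma Phi_has_real_derivative: "(Phi has_real_derivative std_normal_density x) (at x)"
proof -
  have "((\<lambda>u. LBINT t=x-1..u. std_normal_density t) has_vector_derivative std_normal_density x)
          (at x within {x-1..x+1})"
    by (rule interval_integral_FTC2) (auto intro: continuous_on_std_normal_density)
  then have "((\<lambda>u. LBINT t=x-1..u. std_normal_density t) has_real_derivative std_normal_density x) (at x)"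
    by (subst (asm) at_within_interior) (auto simp: has_real_derivative_iff_has_vector_derivative)
  then have "((\<lambda>u. Phi (x-1) + (LBINT t=x-1..u. std_normal_density t)) has_real_derivative std_normal_density x) (at x)"
    using DERIV_add[OF DERIV_const] by fastforce
  then show ?thesis
    by (rule has_field_derivative_transform_within_open[where S = "{x-1<..}"])
       (auto intro: Phi_add_interval_integral[symmetric])
qed

lemma Phi_strict_mono: "strict_mono Phi"
proof (rule strict_monoI)
  show "Phi x < Phi y" if "x < y" for x y :: real
    using that by (rule DERIV_pos_imp_increasing) (meson Phi_has_real_derivative std_normal_density_pos)
qed

lemma Phi_le_1: "Phi x \<le> 1"
proof -
  have "Phi x \<le> (\<integral>t. std_normal_density t \<partial>lborel)"
    unfolding Phi_def set_lebesgue_integral_def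
    by (intro integral_mono integrable_mult_indicator) (auto simp: indicator_def)
  then show ?thesis
    by simp
qed

lemma Phi_less_1: "Phi x < 1"
  using Phi_strict_mono[THEN strict_monoD, of x "x + 1"] Phi_le_1[of "x + 1"] by simp

text \<open>With \<open>q = (1 - \<pi>) p\<close>, \<open>D = \<lambda>A + (1 - \<lambda>)B\<close> and \<open>M = \<pi> D + q\<close> one has
  \<open>1 - e\<^sup>* p\<^sub>H = (1 - \<lambda>) fail_H / (D M)\<close> and \<open>1 - e\<^sup>* p\<^sub>L = (1 - \<lambda>) fail_L / M\<close>.\<close>

definition fail_H :: "real \<Rightarrow> real \<Rightarrow> real \<Rightarrow> real \<Rightarrow> real \<Rightarrow> real" where
  "fail_H pr lam q A B = pr * B * (2 * lam * A + (1 - lam) * B) + q * (lam * A + B)"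

definition fail_L :: "real \<Rightarrow> real \<Rightarrow> real \<Rightarrow> real \<Rightarrow> real \<Rightarrow> real" where
  "fail_L pr lam q A B = pr * (lam * A + B) + q * (1 + lam)"

lemma fail_H_pos:
  "0 < A \<Longrightarrow> 0 < B \<Longrightarrow> 0 \<le> pr \<Longrightarrow> 0 < q \<Longrightarrow> 0 < lam \<Longrightarrow> lam < 1 \<Longrightarrow> 0 < fail_H pr lam q A B"
  unfolding fail_H_def by (intro add_nonneg_pos mult_nonneg_nonneg mult_pos_pos add_pos_pos add_pos_nonneg) auto

lemma fail_L_pos:
  "0 < A \<Longrightarrow> 0 < B \<Longrightarrow> 0 \<le> pr \<Longrightarrow> 0 < q \<Longrightarrow> 0 < lam \<Longrightarrow> 0 < fail_L pr lam q A B"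
  unfolding fail_L_def by (intro add_nonneg_pos mult_nonneg_nonneg mult_pos_pos add_pos_pos) auto

lemma fail_ratio_eq:
  fixes A B pr lam q :: real
  assumes "0 < A" "0 < B" "0 \<le> pr" "0 < q" "0 < lam" "lam < 1"
  shows "(1 - lam * (pr * A + q) / (pr * (lam * A + (1 - lam) * B) + q) * (lam * A / (lam * A + (1 - lam) * B)))
         / (1 - lam * (pr * A + q) / (pr * (lam * A + (1 - lam) * B) + q) * lam)
       = fail_H pr lam q A B / ((lam * A + (1 - lam) * B) * fail_L pr lam q A B)"
proof -
  define D where "D = lam * A + (1 - lam) * B"
  define M where "M = pr * D + q"
  have pos: "0 < D" "0 < M" "0 < fail_L pr lam q A B"
    using assms fail_L_pos[OF assms(1-5)] by (auto simp: D_def M_def intro: add_nonneg_pos add_pos_pos)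
  have H: "1 - lam * (pr * A + q) / M * (lam * A / D) = (1 - lam) * fail_H pr lam q A B / (D * M)"
    using pos mult_pos_pos[OF pos(1,2)] unfolding M_def
    by (simp add: field_simps) (simp add: D_def fail_H_def algebra_simps)
  have L: "1 - lam * (pr * A + q) / M * lam = (1 - lam) * fail_L pr lam q A B / M"
    using pos unfolding M_def by (simp add: field_simps) (simp add: D_def fail_L_def algebra_simps)
  show ?thesis
    using pos \<open>lam < 1\<close> unfolding D_def[symmetric] M_def[symmetric] H L by (simp add: field_simps)
qed

lemma log_fail_ratio_partial_A_neg:
  fixes A B pr lam q :: real
  assumes "0 < B" "B \<le> A" "0 \<le> pr" "0 < q" "0 < lam" "lam < 1"
  shows "(2 * pr * B + q) / fail_H pr lam q A B - 1 / (lam * A + (1 - lam) * B) - pr / fail_L pr lam q A B < 0"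
proof -
  define D where "D = lam * A + (1 - lam) * B"
  define fH where "fH = fail_H pr lam q A B"
  define fL where "fL = fail_L pr lam q A B"
  have A: "0 < A"
    using assms by linarith
  have pos: "0 < D" "0 < fH" "0 < fL"
    using assms A fail_H_pos[OF A] fail_L_pos[OF A] by (auto simp: D_def fH_def fL_def intro: add_pos_nonneg)
  have "B * fL \<le> fH"
  proof -
    have "fH - B * fL = lam * (A - B) * (pr * B + q)"
      by (simp add: fH_def fL_def fail_H_def fail_L_def algebra_simps)
    also have "\<dots> \<ge> 0"
      using assms by simp
    finally show ?thesis by simp
  qed
  moreover have "(1 - lam) * B < D"
    using assms A by (simp add: D_def)
  ultimately have "(1 - lam) * B * (B * fL) < D * fH"
    using assms pos by (intro mult_less_le_imp_less) auto
  then have "0 \<le> pr * (D * fH - (1 - lam) * B * (B * fL))"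
    using assms by simp
  moreover have "fH * fL + pr * fH * D - (2 * pr * B + q) * D * fL
      = lam * q * B * fL + pr * (D * fH - (1 - lam) * B * (B * fL))"
    by (simp add: D_def fH_def fL_def fail_H_def fail_L_def algebra_simps power2_eq_square)
  moreover have "0 < lam * q * B * fL"
    using assms pos by simp
  ultimately have "(2 * pr * B + q) * D * fL < fH * fL + pr * fH * D"
    by linarith
  with pos show ?thesis
    unfolding D_def[symmetric] fH_def[symmetric] fL_def[symmetric] by (simp add: field_simps)
qed

lemma log_fail_ratio_partial_B_pos:
  fixes A B pr lam q :: real
  assumes "0 < B" "B \<le> A" "0 \<le> pr" "0 < q" "0 < lam" "lam < 1"
  shows "0 < (2 * pr * (lam * A + (1 - lam) * B) + q) / fail_H pr lam q A B
             - (1 - lam) / (lam * A + (1 - lam) * B) - pr / fail_L pr lam q A B"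
proof -
  define D where "D = lam * A + (1 - lam) * B"
  define fH where "fH = fail_H pr lam q A B"
  define fL where "fL = fail_L pr lam q A B"
  have A: "0 < A"
    using assms by linarith
  have pos: "0 < D" "0 < fH" "0 < fL"
    using assms A fail_H_pos[OF A] fail_L_pos[OF A] by (auto simp: D_def fH_def fL_def intro: add_pos_nonneg)
  have "fH \<le> D * fL"
  proof -
    have "D * fL - fH = lam\<^sup>2 * (A - B) * (pr * A + q)"
      by (simp add: D_def fH_def fL_def fail_H_def fail_L_def algebra_simps power2_eq_square)
    also have "\<dots> \<ge> 0"
      using assms by simp
    finally show ?thesis by simp
  qed
  have "(1 - lam) * fL < pr * D + q"
  proof -
    have "pr * D + q - (1 - lam) * fL = lam\<^sup>2 * (pr * A + q)"
      by (simp add: D_def fL_def fail_L_def algebra_simps power2_eq_square)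
    also have "\<dots> > 0"
      using assms A by (simp add: add_nonneg_pos)
    finally show ?thesis by simp
  qed
  have "fH * ((1 - lam) * fL + pr * D) \<le> D * fL * ((1 - lam) * fL + pr * D)"
    using \<open>fH \<le> D * fL\<close> assms pos by (intro mult_right_mono) auto
  also have "\<dots> < D * fL * (2 * pr * D + q)"
    using \<open>(1 - lam) * fL < pr * D + q\<close> pos by (intro mult_strict_left_mono) (auto simp: algebra_simps)
  finally have "fH * ((1 - lam) * fL + pr * D) < D * fL * (2 * pr * D + q)" .
  with pos show ?thesis
    unfolding D_def[symmetric] fH_def[symmetric] fL_def[symmetric] by (simp add: field_simps)
qed

lemma log_ratio_mixture_has_real_derivative:
  fixes fA fB :: "real \<Rightarrow> real"
  assumes "(fA has_real_derivative a') (at x)" "(fB has_real_derivative b') (at x)"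
    and "0 < fA x" "0 < fB x" "0 < lam" "lam < 1"
  shows "((\<lambda>y. ln (fA y / (lam * fA y + (1 - lam) * fB y))) has_real_derivative
           (1 - lam) * (a' * fB x / fA x - b') / (lam * fA x + (1 - lam) * fB x)) (at x)"
proof -
  define D where "D = lam * fA x + (1 - lam) * fB x"
  have pos: "0 < D" "0 < fA x / (lam * fA x + (1 - lam) * fB x)"
    using assms by (auto simp: D_def add_pos_pos)
  have "((\<lambda>y. lam * fA y + (1 - lam) * fB y) has_real_derivative lam * a' + (1 - lam) * b') (at x)"
    by (intro DERIV_add DERIV_cmult assms(1,2))
  from DERIV_divide[OF assms(1) this]
  have "((\<lambda>y. fA y / (lam * fA y + (1 - lam) * fB y)) has_real_derivative
          (a' * D - fA x * (lam * a' + (1 - lam) * b')) / (D * D)) (at x)"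
    using pos by (simp add: D_def)
  from DERIV_chain2[OF DERIV_ln_divide[OF pos(2)] this]
  moreover have "1 / (fA x / D) * ((a' * D - fA x * (lam * a' + (1 - lam) * b')) / (D * D))
      = (1 - lam) * (a' * fB x / fA x - b') / D"
    using assms pos by (simp add: field_simps) (simp add: D_def algebra_simps)
  ultimately show ?thesis
    unfolding D_def by simp
qed

lemma fail_H_has_real_derivative:
  assumes "(fA has_real_derivative a') (at x)" "(fB has_real_derivative b') (at x)"
  shows "((\<lambda>y. fail_H pr lam q (fA y) (fB y)) has_real_derivative
           lam * (2 * pr * fB x + q) * a' + (2 * pr * (lam * fA x + (1 - lam) * fB x) + q) * b') (at x)"
  unfolding fail_H_def using assms by (auto intro!: derivative_eq_intros simp: algebra_simps)

lemma fail_L_has_real_derivative: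
  assumes "(fA has_real_derivative a') (at x)" "(fB has_real_derivative b') (at x)"
  shows "((\<lambda>y. fail_L pr lam q (fA y) (fB y)) has_real_derivative pr * lam * a' + pr * b') (at x)"
  unfolding fail_L_def using assms by (auto intro!: derivative_eq_intros simp: algebra_simps)

lemma log_fail_ratio_has_real_derivative:
  fixes fA fB :: "real \<Rightarrow> real"
  assumes "(fA has_real_derivative a') (at x)" "(fB has_real_derivative b') (at x)"
    and "0 < fA x" "0 < fB x" "0 \<le> pr" "0 < q" "0 < lam" "lam < 1"
  defines "D \<equiv> lam * fA x + (1 - lam) * fB x"
    and "H \<equiv> fail_H pr lam q (fA x) (fB x)" and "L \<equiv> fail_L pr lam q (fA x) (fB x)"
  shows "((\<lambda>y. ln (fail_H pr lam q (fA y) (fB y)) - ln (lam * fA y + (1 - lam) * fB y)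
              - ln (fail_L pr lam q (fA y) (fB y))) has_real_derivative
           lam * a' * ((2 * pr * fB x + q) / H - 1 / D - pr / L)
           + b' * ((2 * pr * D + q) / H - (1 - lam) / D - pr / L)) (at x)"
proof -
  have pos: "0 < D" "0 < H" "0 < L"
    using assms fail_H_pos fail_L_pos by (auto simp: add_pos_pos)
  have dD: "((\<lambda>y. lam * fA y + (1 - lam) * fB y) has_real_derivative lam * a' + (1 - lam) * b') (at x)"
    by (intro DERIV_add DERIV_cmult assms(1,2))
  note dH = DERIV_chain2[OF DERIV_ln_divide fail_H_has_real_derivative[OF assms(1,2)], of pr lam q]
  note dL = DERIV_chain2[OF DERIV_ln_divide fail_L_has_real_derivative[OF assms(1,2)], of pr lam q]
  have "((\<lambda>y. ln (fail_H pr lam q (fA y) (fB y)) - ln (lam * fA y + (1 - lam) * fB y)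
              - ln (fail_L pr lam q (fA y) (fB y))) has_real_derivative
           1 / H * (lam * (2 * pr * fB x + q) * a' + (2 * pr * D + q) * b')
           - 1 / D * (lam * a' + (1 - lam) * b') - 1 / L * (pr * lam * a' + pr * b')) (at x)"
    using pos unfolding D_def H_def L_def
    by (intro DERIV_diff dH dL DERIV_chain2[OF DERIV_ln_divide dD]) auto
  then show ?thesis
    by (simp add: diff_divide_distrib add_divide_distrib algebra_simps)
qed

lemma log_ratio_mixture_has_negative_derivative:
  fixes fA fB :: "real \<Rightarrow> real"
  assumes "(fA has_real_derivative a') (at x)" "(fB has_real_derivative b') (at x)" "a' < 0" "0 < b'"
    and "0 < fA x" "0 < fB x" "0 < lam" "lam < 1"
  shows "\<exists>D. ((\<lambda>y. ln (fA y / (lam * fA y + (1 - lam) * fB y))) has_real_derivative D) (at x) \<and> D < 0"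
proof -
  have "a' * fB x / fA x < 0"
    using assms by (simp add: divide_neg_pos mult_neg_pos)
  then have "(1 - lam) * (a' * fB x / fA x - b') / (lam * fA x + (1 - lam) * fB x) < 0"
    using assms by (intro divide_neg_pos mult_pos_neg) (auto simp: add_pos_pos)
  with log_ratio_mixture_has_real_derivative[OF assms(1,2,5-8)] show ?thesis
    by blast
qed

lemma log_fail_ratio_has_positive_derivative:
  fixes fA fB :: "real \<Rightarrow> real"
  assumes "(fA has_real_derivative a') (at x)" "(fB has_real_derivative b') (at x)" "a' < 0" "0 < b'"
    and "0 < fB x" "fB x \<le> fA x" "0 \<le> pr" "0 < q" "0 < lam" "lam < 1"
  shows "\<exists>D. ((\<lambda>y. ln (fail_H pr lam q (fA y) (fB y)) - ln (lam * fA y + (1 - lam) * fB y)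
                    - ln (fail_L pr lam q (fA y) (fB y))) has_real_derivative D) (at x) \<and> D > 0"
proof -
  have "0 < fA x"
    using assms by linarith
  note derivative = log_fail_ratio_has_real_derivative[OF assms(1,2) this assms(5,7-10)]
  have "lam * a' < 0"
    using assms by (simp add: mult_pos_neg)
  with log_fail_ratio_partial_A_neg[OF assms(5-10)] log_fail_ratio_partial_B_pos[OF assms(5-10)]
    derivative \<open>0 < b'\<close>
  show ?thesis
    by (blast intro: add_pos_pos mult_neg_neg mult_pos_pos)
qed

lemma B_fn_eq_A_fn: "B_fn = A_fn"
  by (simp add: fun_eq_iff A_fn_def B_fn_def)

lemma A_fn_pos: "0 < A_fn m \<sigma> s"
  by (simp add: A_fn_def Phi_less_1)

lemma A_fn_strict_mono_mean: "0 < \<sigma> \<Longrightarrow> m < m' \<Longrightarrow> A_fn m \<sigma> s < A_fn m' \<sigma> s"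
  unfolding A_fn_def by (simp add: Phi_strict_mono[THEN strict_monoD] divide_strict_right_mono)

lemma A_fn_has_real_derivative:
  assumes "0 < \<sigma>"
  shows "((\<lambda>\<sigma>. A_fn m \<sigma> s) has_real_derivative std_normal_density ((s - m) / \<sigma>) * (s - m) / \<sigma>\<^sup>2) (at \<sigma>)"
proof -
  have "((\<lambda>\<sigma>. (s - m) / \<sigma>) has_real_derivative - (s - m) / \<sigma>\<^sup>2) (at \<sigma>)"
    using assms by (auto intro!: derivative_eq_intros simp: power2_eq_square)
  then show ?thesis
    unfolding A_fn_def
    by (rule DERIV_cong[OF DERIV_diff[OF DERIV_const DERIV_chain2[OF Phi_has_real_derivative]]])
       (simp add: minus_divide_left algebra_simps)
qed

lemma A_fn_has_negative_derivative:
  assumes "0 < \<sigma>" "s < m"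
  obtains a' where "((\<lambda>\<sigma>. A_fn m \<sigma> s) has_real_derivative a') (at \<sigma>)" "a' < 0"
proof (rule that[OF A_fn_has_real_derivative[OF assms(1)]])
  show "std_normal_density ((s - m) / \<sigma>) * (s - m) / \<sigma>\<^sup>2 < 0"
    using assms std_normal_density_pos by (intro divide_neg_pos mult_pos_neg) auto
qed

lemma A_fn_has_positive_derivative:
  assumes "0 < \<sigma>" "m < s"
  obtains b' where "((\<lambda>\<sigma>. A_fn m \<sigma> s) has_real_derivative b') (at \<sigma>)" "0 < b'"
proof (rule that[OF A_fn_has_real_derivative[OF assms(1)]])
  show "0 < std_normal_density ((s - m) / \<sigma>) * (s - m) / \<sigma>\<^sup>2"
    using assms std_normal_density_pos by simp
qed

lemma J_plus_eq: "J_plus mu0 mu1 \<sigma> lam s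
    = ln (A_fn mu1 \<sigma> s / (lam * A_fn mu1 \<sigma> s + (1 - lam) * A_fn mu0 \<sigma> s))"
  by (simp add: J_plus_def B_fn_eq_A_fn Let_def)

lemma J_minus_eq:
  fixes mu0 mu1 \<sigma> pr lam p s :: real
  assumes "0 < pr" "pr < 1" "0 < lam" "lam < 1" "0 < p"
  defines "A \<equiv> A_fn mu1 \<sigma> s" and "B \<equiv> A_fn mu0 \<sigma> s"
  shows "J_minus mu0 mu1 \<sigma> pr lam p s
    = ln (fail_H pr lam ((1 - pr) * p) A B) - ln (lam * A + (1 - lam) * B) - ln (fail_L pr lam ((1 - pr) * p) A B)"
proof -
  have pos: "0 < A" "0 < B" "0 \<le> pr" "0 < (1 - pr) * p"
    using assms A_fn_pos by auto
  note ratio = fail_ratio_eq[OF pos assms(3,4)]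
  have "0 < lam * A + (1 - lam) * B"
    using pos assms by (simp add: add_pos_pos)
  with fail_H_pos[OF pos assms(3,4)] fail_L_pos[OF pos assms(3)] show ?thesis
    unfolding J_minus_def e_star_def p_H_def p_L_def Let_def B_fn_eq_A_fn A_def[symmetric] B_def[symmetric] ratio
    by (simp add: ln_div ln_mult)
qed

theorem lemmaD6:
  fixes mu0 mu1 sH pr lam p s :: real
  assumes "mu0 < mu1" and "sH > 0"
    and "0 < pr" "pr < 1" and "0 < lam" "lam < 1" and "0 < p" "p < 1"
    and "mu0 < s" "s < mu1"
  shows "(\<exists>D. ((\<lambda>x. J_plus mu0 mu1 x lam s) has_real_derivative D) (at sH) \<and> D < 0)
       \<and> (\<exists>D. ((\<lambda>x. J_minus mu0 mu1 x pr lam p s) has_real_derivative D) (at sH) \<and> D > 0)"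
proof -
  obtain a' where dA: "((\<lambda>x. A_fn mu1 x s) has_real_derivative a') (at sH)" and "a' < 0"
    using A_fn_has_negative_derivative assms by blast
  obtain b' where dB: "((\<lambda>x. A_fn mu0 x s) has_real_derivative b') (at sH)" and "0 < b'"
    using A_fn_has_positive_derivative assms by blast
  have AB: "0 < A_fn mu0 sH s" "A_fn mu0 sH s \<le> A_fn mu1 sH s"
    using A_fn_pos A_fn_strict_mono_mean[of sH mu0 mu1 s] assms by auto
  have "0 < A_fn mu1 sH s"
    by (rule A_fn_pos)
  note J_plus = log_ratio_mixture_has_negative_derivative[OF dA dB \<open>a' < 0\<close> \<open>0 < b'\<close> this AB(1) assms(5,6)]
  have "0 \<le> pr" "0 < (1 - pr) * p"
    using assms by auto
  note J_minus = log_fail_ratio_has_positive_derivative[OF dA dB \<open>a' < 0\<close> \<open>0 < b'\<close> AB this assms(5,6)]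
  show ?thesis
    using J_plus J_minus assms by (simp add: J_plus_eq J_minus_eq)
qed

end
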